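(* Let $m\ge 1$, let $t_0$ be a vertex of $P(G,g_0)$, and let $t_1,\dots,t_m$ and $\mu$-operations $\nu_1,\dots,\nu_m$ be such that for each $i=1,\dots,m$ the operation $\nu_i$ is applicable to $t_{i-1}$ and $t_i=\nu_i(t_{i-1})$, and for each $i=1,\dots,m-1$ the leading element of $\nu_{i+1}$ equals the new element of $\nu_i$. Then $t_0,t_1,\dots,t_m$ are pairwise distinct vertices of $P(G,g_0)$ and any two of them are adjacent, i.e. they induce a complete subgraph of the graph of $P(G,g_0)$.
   Context: Let $G$ be a finite abelian group of order $D$ with zero element $0$, and let $G^+=G\setminus\{0\}$. For $g_0\in G$, let $T(G,g_0)$ be the set of vectors $t=(t(g))_{g\in G^+}\in\mathbb{Z}_{\ge 0}^{G^+}$ with $\sum_{g\in G^+}t(g)g=g_0$ (sum computed in $G$), where the zero vector is excluded when $g_0=0$. The master corner polyhedron is $P(G,g_0)=\mathrm{conv}\,T(G,g_0)\subset\mathbb{R}^{G^+}$. For $t\in T(G,g_0)$ put $G_t=\{g\in G^+ : t(g)>0\}$. The graph of $P(G,g_0)$ has the vertices of $P(G,g_0)$ as nodes, two vertices being adjacent if the segment joining them is an edge (one-dimensional face) of $P(G,g_0)$. $\mu$-operations: For $t\in T(G,g_0)$ and distinct $h,f\in G_t$ with $t(h)\le t(f)$ and $h+f\neq 0$, the operation $\mu_{h,f}$ is said to be applicable to $t$, and $s=\mu_{h,f}(t)$ is defined by $s(h)=0$, $s(f)=t(f)-t(h)$, $s(h+f)=t(h+f)+t(h)$, and $s(g)=t(g)$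 for all other $g\in G^+$. For $t\in T(G,g_0)$ and $h\in G_t$ with $t(h)>1$ and $t(h)h\neq 0$, the operation $\mu_h$ is applicable to $t$, and $s=\mu_h(t)$ is defined by $s(h)=0$, $s(t(h)h)=t(t(h)h)+1$, and $s(g)=t(g)$ for all other $g\in G^+$. The leading element of $\mu_{h,f}$ and of $\mu_h$ is $h$; the new element of $\mu_{h,f}$ applied to $t$ is $h+f$, and the new element of $\mu_h$ applied to $t$ is $t(h)h$. *)

theory Defs
  imports "HOL-Analysis.Analysis"
begin

text \<open>Points of R^(G+) are embedded into real ^ 'a (coordinates indexed by all of G),
  with the coordinate at 0 identically zero.\<close>

primrec nsm :: "nat \<Rightarrow> 'a::ab_group_add \<Rightarrow> 'a" where
  "nsm 0 g = 0"
| "nsm (Suc n) g = g + nsm n g"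

definition Tset :: "'a::{ab_group_add,finite} \<Rightarrow> ('a \<Rightarrow> nat) set" where
  "Tset g0 = {t. t 0 = 0 \<and> (\<Sum>g\<in>UNIV - {0}. nsm (t g) g) = g0
               \<and> (g0 = 0 \<longrightarrow> (\<exists>g. t g \<noteq> 0))}"

definition vecT :: "('a::finite \<Rightarrow> nat) \<Rightarrow> real ^ ('a::finite)" where
  "vecT t = (\<chi> g. real (t g))"

definition corner :: "'a::{ab_group_add,finite} \<Rightarrow> (real ^ ('a::{ab_group_add,finite})) set" where
  "corner g0 = convex hull (vecT ` Tset g0)"

definition is_vertex :: "'a::{ab_group_add,finite} \<Rightarrow> real ^ ('a::{ab_group_add,finite}) \<Rightarrow> bool" where
  "is_vertex g0 x \<longleftrightarrow> x extreme_point_of corner g0"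

definition adjacent :: "'a::{ab_group_add,finite} \<Rightarrow> real ^ ('a::{ab_group_add,finite}) \<Rightarrow> real ^ ('a::{ab_group_add,finite}) \<Rightarrow> bool" where
  "adjacent g0 x y \<longleftrightarrow> is_vertex g0 x \<and> is_vertex g0 y \<and> x \<noteq> y
      \<and> closed_segment x y face_of corner g0"

text \<open>mu-operations: MuPair h f is mu_{h,f}, MuOne h is mu_h.\<close>
datatype 'a muop = MuPair 'a 'a | MuOne 'a

definition supp :: "('a::ab_group_add \<Rightarrow> nat) \<Rightarrow> 'a set" where
  "supp t = {g. g \<noteq> 0 \<and> t g > 0}"

fun applicable :: "('a::ab_group_add \<Rightarrow> nat) \<Rightarrow> 'a muop \<Rightarrow> bool" where
  "applicable t (MuPair h f) \<longleftrightarrow> h \<in> supp t \<and> f \<in> supp t \<and> h \<noteq> f \<and> t h \<le> t f \<and> h + f \<noteq> 0"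
| "applicable t (MuOne h) \<longleftrightarrow> h \<in> supp t \<and> t h > 1 \<and> nsm (t h) h \<noteq> 0"

fun apply_mu :: "('a::ab_group_add \<Rightarrow> nat) \<Rightarrow> 'a muop \<Rightarrow> ('a \<Rightarrow> nat)" where
  "apply_mu t (MuPair h f) =
     (\<lambda>g. if g = h then 0 else if g = f then t f - t h
          else if g = h + f then t (h + f) + t h else t g)"
| "apply_mu t (MuOne h) =
     (let s = t(h := 0) in s(nsm (t h) h := s (nsm (t h) h) + 1))"

fun lead :: "'a muop \<Rightarrow> 'a" where
  "lead (MuPair h f) = h"
| "lead (MuOne h) = h"

fun new_elem :: "('a::ab_group_add \<Rightarrow> nat) \<Rightarrow> 'a muop \<Rightarrow> 'a" where
  "new_elem t (MuPair h f) = h + f"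
| "new_elem t (MuOne h) = nsm (t h) h"

end

theory Submission
  imports Defs
begin

text \<open>
  A segment F between two points of P = conv T
  is a face iff every convex combination of lattice points of T that lands in F has all
  its (positively weighted) points in F (the two face lemmas below). A mu-operation is an
  exchange: it removes kappa copies of a bundle R of group elements (mass at least 2) and
  inserts kappa copies of the new element n, where R and n have the same group sum; hence
  such exchanges, and their inverses, map T into itself.

  Key steps, for an edge-or-vertex segment [u,v] of P with mass v <= mass u and a
  mu-operation applicable at v:
  (1) u(n) = 0, otherwise exchanging R and n between u and v produces lattice points
      whose midpoint is that of u and v but one of which is too light to lie on [u,v];
  (2) the segment from u to the result w of the operation is again a face, provided
      u = v, or u(h) = 0 for the leading element h. To see this one undoes the exchange
      on every lattice point of a convex combination landing on [u,w], obtaining a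
      combination landing on [u,v].
  Induction along the chain gives that [t_0, t_j] is a face for all j >= 1, with
  strictly decreasing mass; restarting the chain at t_i gives every pair.
\<close>

section \<open>Faces of the convex hull of a set of points\<close>

lemma face_of_convex_combination:
  fixes X :: "'i \<Rightarrow> 'v::real_vector"
  assumes F: "F face_of C" and C: "convex C" and I: "finite I" "k \<in> I"
    and X: "\<And>j. j \<in> I \<Longrightarrow> X j \<in> C" and l: "\<And>j. j \<in> I \<Longrightarrow> 0 < l j"
    and l1: "sum l I = 1" and comb: "(\<Sum>j\<in>I. l j *\<^sub>R X j) \<in> F"
  shows "X k \<in> F"
proof -
  define J where "J = I - {k}"
  define s where "s = sum l J"
  have J: "finite J" "\<And>j. j \<in> J \<Longrightarrow> j \<in> I" using I by (auto simp: J_def)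
  have lk: "l k = 1 - s" using l1 sum.remove[OF I, of l] unfolding s_def J_def by linarith
  have split: "(\<Sum>j\<in>I. l j *\<^sub>R X j) = l k *\<^sub>R X k + (\<Sum>j\<in>J. l j *\<^sub>R X j)"
    using sum.remove[OF I] by (simp add: J_def)
  show ?thesis
  proof (cases "J = {}")
    case True
    then show ?thesis using comb split lk by (simp add: s_def)
  next
    case False
    have s: "0 < s" unfolding s_def using J False l by (intro sum_pos) auto
    have "0 < l k" using l I by auto
    define w where "w = (\<Sum>j\<in>J. (l j / s) *\<^sub>R X j)"
    have wC: "w \<in> C" unfolding w_def
    proof (rule convex_sum[OF J(1) C])
      show "(\<Sum>j\<in>J. l j / s) = 1" using s by (simp add: s_def flip: sum_divide_distrib)
    qed (use J l X s in \<open>auto intro: less_imp_le\<close>)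
    have x: "(\<Sum>j\<in>I. l j *\<^sub>R X j) = (1 - s) *\<^sub>R X k + s *\<^sub>R w"
      using split lk s by (simp add: w_def scaleR_sum_right)
    show ?thesis
    proof (cases "X k = w")
      case True
      then show ?thesis using comb x by (simp flip: scaleR_add_left)
    next
      case False
      then have "(1 - s) *\<^sub>R X k + s *\<^sub>R w \<in> open_segment (X k) w"
        using s lk \<open>0 < l k\<close> by (auto simp: in_segment)
      then show ?thesis using face_ofD[OF F _ X[OF I(2)] wC] comb x by auto
    qed
  qed
qed

lemma convex_hull_image_explicit:
  fixes f :: "'b \<Rightarrow> 'v::real_vector"
  assumes "y \<in> convex hull (f ` S)"
  obtains A c where "finite A" "A \<subseteq> S" "\<And>x. x \<in> A \<Longrightarrow> 0 < c x" "sum c A = 1"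
    "y = (\<Sum>x\<in>A. c x *\<^sub>R f x)"
proof -
  obtain P u where P: "finite P" "P \<subseteq> f ` S" "\<forall>x\<in>P. 0 \<le> u x" "sum u P = 1"
    "(\<Sum>v\<in>P. u v *\<^sub>R v) = y"
    using assms unfolding convex_hull_explicit by blast
  define Q where "Q = {x \<in> P. 0 < u x}"
  obtain A where A: "A \<subseteq> S" "inj_on f A" "Q = f ` A"
    using P(2) subset_image_inj[of Q f S] by (auto simp: Q_def)
  have "finite Q" using P(1) by (simp add: Q_def)
  then have "finite A" using A(3) finite_image_iff[OF A(2)] by simp
  have "sum u P = sum u Q" "(\<Sum>v\<in>P. u v *\<^sub>R v) = (\<Sum>v\<in>Q. u v *\<^sub>R v)"
    using P(1,3) by (intro sum.mono_neutral_right; force simp: Q_def)+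
  then show ?thesis
    using that[of A "\<lambda>x. u (f x)"] \<open>finite A\<close> A P(4,5)
    by (auto simp: Q_def sum.reindex)
qed

lemma face_of_convex_hull_imageI:
  fixes f :: "'b \<Rightarrow> 'v::real_vector"
  assumes convF: "convex F" and sub: "F \<subseteq> convex hull (f ` S)"
    and comb: "\<And>A c. finite A \<Longrightarrow> A \<subseteq> S \<Longrightarrow> (\<And>x. x \<in> A \<Longrightarrow> 0 < c x) \<Longrightarrow> sum c A = 1
                 \<Longrightarrow> (\<Sum>x\<in>A. c x *\<^sub>R f x) \<in> F \<Longrightarrow> f ` A \<subseteq> F"
  shows "F face_of convex hull (f ` S)"
  unfolding face_of_def
proof (intro conjI sub convF ballI impI)
  fix a b x
  assume a: "a \<in> convex hull (f ` S)" and b: "b \<in> convex hull (f ` S)"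
    and x: "x \<in> F" "x \<in> open_segment a b"
  obtain A c where A: "finite A" "A \<subseteq> S" "\<And>x. x \<in> A \<Longrightarrow> 0 < c x" "sum c A = 1"
    "a = (\<Sum>x\<in>A. c x *\<^sub>R f x)"
    using convex_hull_image_explicit[OF a] by blast
  obtain B d where B: "finite B" "B \<subseteq> S" "\<And>x. x \<in> B \<Longrightarrow> 0 < d x" "sum d B = 1"
    "b = (\<Sum>x\<in>B. d x *\<^sub>R f x)"
    using convex_hull_image_explicit[OF b] by blast
  obtain \<mu> where \<mu>: "0 < \<mu>" "\<mu> < 1" "x = (1 - \<mu>) *\<^sub>R a + \<mu> *\<^sub>R b"
    using x(2) by (auto simp: in_segment)
  define e where
    "e z = (1 - \<mu>) * (if z \<in> A then c z else 0) + \<mu> * (if z \<in> B then d z else 0)" for z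
  have AB: "finite (A \<union> B)" "A \<union> B \<subseteq> S" using A B by auto
  have restrict: "(\<Sum>z\<in>A \<union> B. if z \<in> D then g z else 0) = sum g D"
    if "D \<subseteq> A \<union> B" for D and g :: "'b \<Rightarrow> 'c::comm_monoid_add"
    using sum.inter_restrict[OF AB(1), of g D] that by (simp add: Int_absorb1)
  have "0 < e z" if "z \<in> A \<union> B" for z
  proof -
    have "0 \<le> (if z \<in> A then c z else 0)" "0 \<le> (if z \<in> B then d z else 0)"
      using A(3) B(3) by (auto intro: less_imp_le)
    moreover have "0 < (if z \<in> A then c z else 0) \<or> 0 < (if z \<in> B then d z else 0)"
      using that A(3) B(3) by auto
    ultimately show ?thesis
      using \<mu> unfolding e_def by (smt (verit) mult_pos_pos mult_nonneg_nonneg)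
  qed
  moreover have "sum e (A \<union> B) = 1"
    using A(4) B(4) by (simp add: e_def sum.distrib restrict flip: sum_distrib_left)
  moreover have "(\<Sum>z\<in>A \<union> B. e z *\<^sub>R f z) \<in> F"
  proof -
    have pointwise: "e z *\<^sub>R f z = (1 - \<mu>) *\<^sub>R (if z \<in> A then c z *\<^sub>R f z else 0)
        + \<mu> *\<^sub>R (if z \<in> B then d z *\<^sub>R f z else 0)" for z
      by (simp add: e_def scaleR_add_left)
    have "(\<Sum>z\<in>A \<union> B. e z *\<^sub>R f z)
        = (1 - \<mu>) *\<^sub>R (\<Sum>z\<in>A \<union> B. if z \<in> A then c z *\<^sub>R f z else 0)
          + \<mu> *\<^sub>R (\<Sum>z\<in>A \<union> B. if z \<in> B then d z *\<^sub>R f z else 0)"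
      unfolding pointwise by (simp add: sum.distrib scaleR_sum_right)
    then show ?thesis using x(1) \<mu>(3) A(5) B(5) by (simp add: restrict)
  qed
  ultimately have ABF: "f ` (A \<union> B) \<subseteq> F" using comb[OF AB] by blast
  show "a \<in> F" unfolding A(5)
    by (rule convex_sum[OF A(1) convF A(4)]) (use A(3) ABF in \<open>auto intro: less_imp_le\<close>)
  show "b \<in> F" unfolding B(5)
    by (rule convex_sum[OF B(1) convF B(4)]) (use B(3) ABF in \<open>auto intro: less_imp_le\<close>)
qed

section \<open>Group sums, masses and the exchange principle\<close>

definition gsum :: "('a::{ab_group_add,finite} \<Rightarrow> nat) \<Rightarrow> 'a" where
  "gsum t = (\<Sum>g\<in>UNIV - {0}. nsm (t g) g)"

definition mass :: "('a::finite \<Rightarrow> nat) \<Rightarrow> nat" where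
  "mass t = (\<Sum>g\<in>UNIV. t g)"

definition unit_at :: "'a \<Rightarrow> 'a \<Rightarrow> nat" where
  "unit_at x g = (if g = x then 1 else 0)"

lemma nsm_add: "nsm (a + b) g = nsm a g + nsm b g"
  by (induction a) (simp_all add: algebra_simps)

lemma gsum_add: "gsum (\<lambda>g. a g + b g) = gsum a + gsum b"
  by (simp add: gsum_def nsm_add sum.distrib)

lemma gsum_scale: "gsum (\<lambda>g. c * a g) = nsm c (gsum a)"
proof (induction c)
  case 0
  show ?case by (simp add: gsum_def)
next
  case (Suc c)
  have "gsum (\<lambda>g. Suc c * a g) = gsum a + gsum (\<lambda>g. c * a g)"
    using gsum_add[of a "\<lambda>g. c * a g"] by simp
  then show ?case by (simp add: Suc.IH)
qed

lemma gsum_unit: "x \<noteq> 0 \<Longrightarrow> gsum (unit_at x) = x"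
proof -
  assume "x \<noteq> 0"
  have "gsum (unit_at x) = (\<Sum>g\<in>UNIV - {0}. if g = x then x else 0)"
    unfolding gsum_def unit_at_def by (rule sum.cong) auto
  also have "\<dots> = x" using \<open>x \<noteq> 0\<close> by simp
  finally show ?thesis .
qed

lemma mass_add_scale: "mass (\<lambda>g. a g + c * b g) = mass a + c * mass b"
  by (simp add: mass_def sum.distrib sum_distrib_left)

lemma mass_unit: "mass (unit_at x) = 1"
  by (simp add: mass_def unit_at_def)

lemma le_mass: "t g \<le> mass t"
  unfolding mass_def by (rule member_le_sum) auto

lemma mass_eq_0_iff: "mass t = 0 \<longleftrightarrow> (\<forall>g. t g = 0)"
  by (simp add: mass_def)

lemma mass_pos_iff: "0 < mass t \<longleftrightarrow> (\<exists>g. t g \<noteq> 0)"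
  unfolding neq0_conv[symmetric] mass_eq_0_iff by simp

text \<open>Membership in T(G,g0) in terms of the group sum; the mass replaces the exclusion
  of the zero vector (which only matters when g0 = 0).\<close>

lemma Tset_iff: "t \<in> Tset g0 \<longleftrightarrow> t 0 = 0 \<and> gsum t = g0 \<and> 0 < mass t"
proof -
  have "\<exists>g. t g \<noteq> 0" if "gsum t \<noteq> 0"
    using that by (rule contrapos_np) (simp add: gsum_def)
  then show ?thesis unfolding Tset_def gsum_def[symmetric] mass_pos_iff by blast
qed

lemma Tset_exchange:
  assumes p: "p \<in> Tset g0" and eq: "\<And>g. q g + c g = p g + d g" and cd: "gsum c = gsum d"
    and "q 0 = 0" and "0 < mass q"
  shows "q \<in> Tset g0"
proof -
  have "gsum q + gsum c = gsum p + gsum d"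
    using arg_cong[of _ _ gsum, OF ext[OF eq]] by (simp add: gsum_add)
  then show ?thesis using assms by (simp add: Tset_iff)
qed

section \<open>Mu-operations as exchanges\<close>

text \<open>A mu-operation removes kappa copies of the bundle R and inserts kappa copies of the
  new element: mu_{h,f} has kappa = t(h) and R = {h,f}, mu_h has kappa = 1 and R consisting
  of t(h) copies of h.\<close>

fun mu_mult :: "('a::ab_group_add \<Rightarrow> nat) \<Rightarrow> 'a muop \<Rightarrow> nat" where
  "mu_mult t (MuPair h f) = t h"
| "mu_mult t (MuOne h) = 1"

fun mu_removed :: "('a::ab_group_add \<Rightarrow> nat) \<Rightarrow> 'a muop \<Rightarrow> 'a \<Rightarrow> nat" where
  "mu_removed t (MuPair h f) = (\<lambda>g. unit_at h g + unit_at f g)"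
| "mu_removed t (MuOne h) = (\<lambda>g. t h * unit_at h g)"

lemma mu_exchange:
  assumes "applicable t \<nu>"
  shows "apply_mu t \<nu> g + mu_mult t \<nu> * mu_removed t \<nu> g
       = t g + mu_mult t \<nu> * unit_at (new_elem t \<nu>) g"
proof (cases \<nu>)
  case (MuPair h f)
  then have "h \<noteq> f" "t h \<le> t f" "h \<noteq> 0" "f \<noteq> 0" using assms by (auto simp: supp_def)
  then have "h + f \<noteq> h" "h + f \<noteq> f" by auto
  with MuPair \<open>h \<noteq> f\<close> \<open>t h \<le> t f\<close> show ?thesis by (auto simp: unit_at_def)
qed (auto simp: unit_at_def Let_def)

lemma mu_new_nonzero: "applicable t \<nu> \<Longrightarrow> new_elem t \<nu> \<noteq> 0"
  by (cases \<nu>) (auto simp: supp_def)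

lemma mu_mult_pos: "applicable t \<nu> \<Longrightarrow> 0 < mu_mult t \<nu>"
  by (cases \<nu>) (auto simp: supp_def)

lemma mu_removed_le: "applicable t \<nu> \<Longrightarrow> mu_mult t \<nu> * mu_removed t \<nu> g \<le> t g"
  by (cases \<nu>) (auto simp: supp_def unit_at_def)

lemma mu_removed_zero: "applicable t \<nu> \<Longrightarrow> mu_removed t \<nu> 0 = 0"
  by (cases \<nu>) (auto simp: supp_def unit_at_def)

lemma mu_lead:
  assumes "applicable t \<nu>"
  shows "t (lead \<nu>) = mu_mult t \<nu> * mu_removed t \<nu> (lead \<nu>)" "0 < mu_removed t \<nu> (lead \<nu>)"
  using assms by (cases \<nu>; auto simp: supp_def unit_at_def)+

lemma mu_removed_new:
  assumes "applicable t \<nu>" and "new_elem t \<nu> \<noteq> lead \<nu>"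
  shows "mu_removed t \<nu> (new_elem t \<nu>) = 0"
proof (cases \<nu>)
  case (MuPair h f)
  then have "h \<noteq> 0" "f \<noteq> 0" using assms by (auto simp: supp_def)
  then have "h + f \<noteq> h" "h + f \<noteq> f" by auto
  with MuPair show ?thesis by (simp add: unit_at_def)
qed (use assms in \<open>auto simp: unit_at_def\<close>)

lemma mu_removed_gsum:
  fixes t :: "'a::{ab_group_add,finite} \<Rightarrow> nat"
  assumes "applicable t \<nu>"
  shows "gsum (mu_removed t \<nu>) = new_elem t \<nu>"
proof (cases \<nu>)
  case (MuPair h f)
  then have "h \<noteq> 0" "f \<noteq> 0" using assms by (auto simp: supp_def)
  with MuPair show ?thesis by (simp add: gsum_add gsum_unit)
next
  case (MuOne h)
  then have "h \<noteq> 0" using assms by (auto simp: supp_def)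
  with MuOne show ?thesis by (simp add: gsum_scale gsum_unit)
qed

lemma mu_removed_mass:
  fixes t :: "'a::{ab_group_add,finite} \<Rightarrow> nat"
  assumes "applicable t \<nu>"
  shows "2 \<le> mass (mu_removed t \<nu>)"
proof (cases \<nu>)
  case (MuPair h f)
  then show ?thesis
    using mass_add_scale[of "unit_at h" 1 "unit_at f"] by (simp add: mass_unit)
next
  case (MuOne h)
  have "mass (\<lambda>g. t h * unit_at h g) = t h * mass (unit_at h)"
    by (simp add: mass_def sum_distrib_left)
  then show ?thesis using assms MuOne by (simp add: mass_unit)
qed

lemma shift_forward_Tset:
  assumes a: "applicable t \<nu>" and p: "p \<in> Tset g0" and \<gamma>: "0 < \<gamma>"
    and le: "\<And>g. \<gamma> * mu_removed t \<nu> g \<le> p g"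
    and eq: "\<And>g. q g + \<gamma> * mu_removed t \<nu> g = p g + \<gamma> * unit_at (new_elem t \<nu>) g"
  shows "q \<in> Tset g0"
proof (rule Tset_exchange[OF p eq])
  show "gsum (\<lambda>g. \<gamma> * mu_removed t \<nu> g) = gsum (\<lambda>g. \<gamma> * unit_at (new_elem t \<nu>) g)"
    using a by (simp add: gsum_scale mu_removed_gsum gsum_unit mu_new_nonzero)
  show "q 0 = 0"
    using eq[of 0] p a by (simp add: Tset_iff unit_at_def mu_new_nonzero)
  have "\<gamma> \<le> q (new_elem t \<nu>)"
    using eq[of "new_elem t \<nu>"] le[of "new_elem t \<nu>"] by (simp add: unit_at_def)
  then show "0 < mass q" using le_mass[of q] \<gamma> by (meson less_le_trans order_trans)
qed

lemma shift_back_Tset: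
  assumes a: "applicable t \<nu>" and p: "p \<in> Tset g0"
    and eq: "\<And>g. q g + \<gamma> * unit_at (new_elem t \<nu>) g = p g + \<gamma> * mu_removed t \<nu> g"
  shows "q \<in> Tset g0"
proof (rule Tset_exchange[OF p eq])
  show "gsum (\<lambda>g. \<gamma> * unit_at (new_elem t \<nu>) g) = gsum (\<lambda>g. \<gamma> * mu_removed t \<nu> g)"
    using a by (simp add: gsum_scale mu_removed_gsum gsum_unit mu_new_nonzero)
  show "q 0 = 0"
    using eq[of 0] p a by (simp add: Tset_iff mu_removed_zero)
  have "mass (\<lambda>g. q g + \<gamma> * unit_at (new_elem t \<nu>) g) = mass (\<lambda>g. p g + \<gamma> * mu_removed t \<nu> g)"
    by (simp only: eq)
  then have "mass q + \<gamma> = mass p + \<gamma> * mass (mu_removed t \<nu>)"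
    by (simp add: mass_add_scale mass_unit)
  moreover have "\<gamma> * 2 \<le> \<gamma> * mass (mu_removed t \<nu>)"
    using mu_removed_mass[OF a] by (rule mult_le_mono2)
  moreover have "0 < mass p" using p by (simp add: Tset_iff)
  ultimately show "0 < mass q" by linarith
qed

lemma apply_mu_Tset: "applicable t \<nu> \<Longrightarrow> t \<in> Tset g0 \<Longrightarrow> apply_mu t \<nu> \<in> Tset g0"
  by (rule shift_forward_Tset[OF _ _ mu_mult_pos mu_removed_le mu_exchange])

lemma mass_apply_mu:
  assumes a: "applicable t \<nu>"
  shows "mass (apply_mu t \<nu>) < mass t"
proof -
  have "mass (\<lambda>g. apply_mu t \<nu> g + mu_mult t \<nu> * mu_removed t \<nu> g)
      = mass (\<lambda>g. t g + mu_mult t \<nu> * unit_at (new_elem t \<nu>) g)"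
    by (simp only: mu_exchange[OF a])
  then have "mass (apply_mu t \<nu>) + mu_mult t \<nu> * mass (mu_removed t \<nu>) = mass t + mu_mult t \<nu>"
    by (simp add: mass_add_scale mass_unit)
  moreover have "mu_mult t \<nu> * 2 \<le> mu_mult t \<nu> * mass (mu_removed t \<nu>)"
    using mu_removed_mass[OF a] by simp
  ultimately show ?thesis using mu_mult_pos[OF a] by linarith
qed

section \<open>Lattice points as points of P(G,g0)\<close>

lemma vecT_component [simp]: "vecT t $ g = real (t g)"
  by (simp add: vecT_def)

lemma vecT_eq_iff: "vecT s = vecT t \<longleftrightarrow> s = t"
  by (auto simp: vec_eq_iff fun_eq_iff)

lemma vecT_in_corner: "t \<in> Tset g0 \<Longrightarrow> vecT t \<in> corner g0"
  by (simp add: corner_def hull_inc)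

lemma convex_corner: "convex (corner g0)"
  by (simp add: corner_def)

lemma vertex_in_Tset: "is_vertex g0 (vecT t) \<Longrightarrow> t \<in> Tset g0"
  using extreme_point_of_convex_hull by (fastforce simp: is_vertex_def corner_def vecT_eq_iff)

lemma vertex_face: "is_vertex g0 x \<Longrightarrow> closed_segment x x face_of corner g0"
  by (simp add: is_vertex_def face_of_singleton)

lemma endpoint_vertex: "closed_segment x y face_of corner g0 \<Longrightarrow> is_vertex g0 y"
  unfolding is_vertex_def by (rule segment_face_of(2))

definition mu_dir ::
    "('a::{ab_group_add,finite} \<Rightarrow> nat) \<Rightarrow> 'a muop \<Rightarrow> real ^ ('a::{ab_group_add,finite})" where
  "mu_dir t \<nu> = vecT (unit_at (new_elem t \<nu>)) - vecT (mu_removed t \<nu>)"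

lemma vecT_shift:
  assumes "\<And>g. q g + \<gamma> * mu_removed t \<nu> g = p g + \<gamma> * unit_at (new_elem t \<nu>) g"
  shows "vecT q = vecT p + real \<gamma> *\<^sub>R mu_dir t \<nu>"
proof -
  have "real (q g) + real \<gamma> * real (mu_removed t \<nu> g)
      = real (p g) + real \<gamma> * real (unit_at (new_elem t \<nu>) g)" for g
    using arg_cong[OF assms[of g], of real] by simp
  then show ?thesis by (simp add: vec_eq_iff mu_dir_def algebra_simps)
qed

lemma vecT_apply_mu:
  "applicable t \<nu> \<Longrightarrow> vecT (apply_mu t \<nu>) = vecT t + real (mu_mult t \<nu>) *\<^sub>R mu_dir t \<nu>"
  by (rule vecT_shift[OF mu_exchange])

lemma mu_dir_new:
  "applicable t \<nu> \<Longrightarrow> new_elem t \<nu> \<noteq> lead \<nu> \<Longrightarrow> mu_dir t \<nu> $ new_elem t \<nu> = 1"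
  by (simp add: mu_dir_def mu_removed_new unit_at_def)

lemma mu_dir_lead:
  "new_elem t \<nu> \<noteq> lead \<nu> \<Longrightarrow> mu_dir t \<nu> $ lead \<nu> = - real (mu_removed t \<nu> (lead \<nu>))"
  by (simp add: mu_dir_def unit_at_def)

lemma mass_on_segment:
  assumes q: "vecT q \<in> closed_segment (vecT u) (vecT v)" and m: "mass v \<le> mass u"
  shows "mass v \<le> mass q"
proof -
  obtain \<theta> where \<theta>: "0 \<le> \<theta>" "\<theta> \<le> 1" "vecT q = (1 - \<theta>) *\<^sub>R vecT u + \<theta> *\<^sub>R vecT v"
    using q by (auto simp: in_segment)
  have "real (mass q) = (\<Sum>g\<in>UNIV. vecT q $ g)" by (simp add: mass_def)
  also have "\<dots> = (1 - \<theta>) * real (mass u) + \<theta> * real (mass v)"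
    by (simp add: \<theta>(3) mass_def sum.distrib sum_distrib_left)
  also have "\<dots> \<ge> (1 - \<theta>) * real (mass v) + \<theta> * real (mass v)"
    using \<theta> m by (simp add: mult_left_mono)
  finally show ?thesis by (simp add: algebra_simps)
qed

lemma segment_face_of_cornerI:
  assumes u: "u \<in> Tset g0" and w: "w \<in> Tset g0"
    and comb: "\<And>A c \<theta> p. finite A \<Longrightarrow> A \<subseteq> Tset g0 \<Longrightarrow> (\<And>p. p \<in> A \<Longrightarrow> 0 < c p)
      \<Longrightarrow> sum c A = 1 \<Longrightarrow> 0 \<le> \<theta> \<Longrightarrow> \<theta> \<le> 1
      \<Longrightarrow> (\<Sum>p\<in>A. c p *\<^sub>R vecT p) = (1 - \<theta>) *\<^sub>R vecT u + \<theta> *\<^sub>R vecT w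
      \<Longrightarrow> p \<in> A \<Longrightarrow> vecT p \<in> closed_segment (vecT u) (vecT w)"
  shows "closed_segment (vecT u) (vecT w) face_of corner g0"
  unfolding corner_def
proof (rule face_of_convex_hull_imageI)
  show "closed_segment (vecT u) (vecT w) \<subseteq> convex hull (vecT ` Tset g0)"
    using vecT_in_corner[OF u] vecT_in_corner[OF w] convex_corner
    by (simp add: corner_def closed_segment_subset)
  show "vecT ` A \<subseteq> closed_segment (vecT u) (vecT w)"
    if "finite A" "A \<subseteq> Tset g0" "\<And>p. p \<in> A \<Longrightarrow> 0 < c p" "sum c A = 1"
      "(\<Sum>p\<in>A. c p *\<^sub>R vecT p) \<in> closed_segment (vecT u) (vecT w)" for A c
    using that(5) comb[OF that(1-4)] by (auto simp: in_segment(1))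
qed simp

section \<open>The two key properties of a mu-operation at the end of an edge\<close>

text \<open>Otherwise
  moving one exchange from v to u gives lattice points q1, q2 with the same midpoint as
  u, v, so q2 lies on the face [u,v]; but q2 is lighter than v.\<close>

lemma new_elem_outside:
  assumes F: "closed_segment (vecT u) (vecT v) face_of corner g0"
    and uT: "u \<in> Tset g0" and vT: "v \<in> Tset g0" and m: "mass v \<le> mass u"
    and a: "applicable v \<nu>"
  shows "u (new_elem v \<nu>) = 0"
proof (rule ccontr)
  let ?n = "new_elem v \<nu>" and ?R = "mu_removed v \<nu>"
  assume "u ?n \<noteq> 0"
  define q1 where "q1 g = u g + ?R g - unit_at ?n g" for g
  define q2 where "q2 g = v g - ?R g + unit_at ?n g" for g
  have Rv: "?R g \<le> v g" for g
  proof -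
    have "?R g \<le> mu_mult v \<nu> * ?R g" using mu_mult_pos[OF a] by simp
    then show ?thesis using mu_removed_le[OF a, of g] by (rule order_trans)
  qed
  have eq1: "q1 g + 1 * unit_at ?n g = u g + 1 * ?R g" for g
    using \<open>u ?n \<noteq> 0\<close> by (auto simp: q1_def unit_at_def)
  have eq2: "q2 g + 1 * ?R g = v g + 1 * unit_at ?n g" for g
    using Rv[of g] by (simp add: q2_def)
  have "mass (\<lambda>g. q2 g + 1 * ?R g) = mass (\<lambda>g. v g + 1 * unit_at ?n g)"
    by (simp only: eq2)
  then have mass_q2: "mass q2 + mass ?R = mass v + 1"
    unfolding mass_add_scale mass_unit by simp
  have q1T: "q1 \<in> Tset g0" by (rule shift_back_Tset[OF a uT eq1])
  have q2T: "q2 \<in> Tset g0" by (rule shift_forward_Tset[OF a vT _ _ eq2]) (simp_all add: Rv)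
  have "vecT u = vecT q1 + mu_dir v \<nu>" "vecT q2 = vecT v + mu_dir v \<nu>"
    using vecT_shift[of u 1 v \<nu> q1] vecT_shift[OF eq2] eq1 by (simp_all add: algebra_simps)
  then have mid: "midpoint (vecT q1) (vecT q2) = midpoint (vecT u) (vecT v)"
    by (simp add: midpoint_def algebra_simps)
  have "vecT q2 \<in> closed_segment (vecT u) (vecT v)"
  proof (cases "vecT q1 = vecT q2")
    case True
    then show ?thesis using mid midpoint_in_closed_segment by (metis midpoint_idem)
  next
    case False
    then have "midpoint (vecT u) (vecT v) \<in> open_segment (vecT q1) (vecT q2)"
      using mid by (metis midpoint_in_open_segment)
    then show ?thesis
      using face_ofD[OF F _ vecT_in_corner[OF q1T] vecT_in_corner[OF q2T]] by simp
  qed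
  then have "mass v \<le> mass q2" using m by (rule mass_on_segment)
  then show False using mass_q2 mu_removed_mass[OF a] by linarith
qed

lemma undo_exchange:
  assumes a: "applicable v \<nu>" and p: "p \<in> Tset g0"
  shows "vecT p - real (p (new_elem v \<nu>)) *\<^sub>R mu_dir v \<nu> \<in> vecT ` Tset g0"
proof -
  let ?n = "new_elem v \<nu>"
  define y where "y g = p g + p ?n * mu_removed v \<nu> g - p ?n * unit_at ?n g" for g
  have y_eq: "y g + p ?n * unit_at ?n g = p g + p ?n * mu_removed v \<nu> g" for g
    by (simp add: y_def unit_at_def)
  have "vecT p = vecT y + real (p ?n) *\<^sub>R mu_dir v \<nu>" by (rule vecT_shift) (rule y_eq[symmetric])
  moreover have "y \<in> Tset g0" by (rule shift_back_Tset[OF a p y_eq])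
  ultimately show ?thesis by force
qed

lemma undo_on_segment:
  assumes F: "closed_segment (vecT u) (vecT v) face_of corner g0"
    and a: "applicable v \<nu>" and un: "u (new_elem v \<nu>) = 0" and vn: "v (new_elem v \<nu>) = 0"
    and hn: "new_elem v \<nu> \<noteq> lead \<nu>"
    and A: "finite A" "A \<subseteq> Tset g0" "\<And>p. p \<in> A \<Longrightarrow> 0 < c p" "sum c A = 1"
    and \<theta>: "0 \<le> \<theta>" "\<theta> \<le> 1"
    and comb: "(\<Sum>p\<in>A. c p *\<^sub>R vecT p) = (1 - \<theta>) *\<^sub>R vecT u + \<theta> *\<^sub>R vecT (apply_mu v \<nu>)"
  shows "(\<Sum>p\<in>A. c p * real (p (new_elem v \<nu>))) = \<theta> * real (mu_mult v \<nu>)"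
    and "(\<Sum>p\<in>A. c p *\<^sub>R (vecT p - real (p (new_elem v \<nu>)) *\<^sub>R mu_dir v \<nu>))
          = (1 - \<theta>) *\<^sub>R vecT u + \<theta> *\<^sub>R vecT v"
    and "\<And>p. p \<in> A \<Longrightarrow> vecT p - real (p (new_elem v \<nu>)) *\<^sub>R mu_dir v \<nu>
                          \<in> closed_segment (vecT u) (vecT v)"
proof -
  let ?n = "new_elem v \<nu>" and ?d = "mu_dir v \<nu>" and ?\<kappa> = "mu_mult v \<nu>"
  have W: "vecT (apply_mu v \<nu>) = vecT v + real ?\<kappa> *\<^sub>R ?d" by (rule vecT_apply_mu[OF a])
  show weight: "(\<Sum>p\<in>A. c p * real (p ?n)) = \<theta> * real ?\<kappa>"
    using arg_cong[OF comb, of "\<lambda>x. x $ ?n"] un vn mu_dir_new[OF a hn] W by simp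
  show undone: "(\<Sum>p\<in>A. c p *\<^sub>R (vecT p - real (p ?n) *\<^sub>R ?d)) = (1 - \<theta>) *\<^sub>R vecT u + \<theta> *\<^sub>R vecT v"
  proof -
    have "(\<Sum>p\<in>A. c p *\<^sub>R (vecT p - real (p ?n) *\<^sub>R ?d))
        = (\<Sum>p\<in>A. c p *\<^sub>R vecT p) - (\<Sum>p\<in>A. c p * real (p ?n)) *\<^sub>R ?d"
      by (simp add: scaleR_diff_right sum_subtractf scaleR_sum_left)
    also have "\<dots> = (1 - \<theta>) *\<^sub>R vecT u + \<theta> *\<^sub>R vecT v"
      using comb weight W by (simp add: algebra_simps)
    finally show ?thesis .
  qed
  show "vecT p - real (p ?n) *\<^sub>R ?d \<in> closed_segment (vecT u) (vecT v)" if "p \<in> A" for p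
  proof (rule face_of_convex_combination[OF F convex_corner A(1) that])
    show "vecT p - real (p ?n) *\<^sub>R ?d \<in> corner g0" if "p \<in> A" for p
    proof -
      have "vecT p - real (p ?n) *\<^sub>R ?d \<in> vecT ` Tset g0"
        using undo_exchange[OF a] A(2) that by blast
      then show ?thesis by (simp add: corner_def hull_inc)
    qed
    show "(\<Sum>p\<in>A. c p *\<^sub>R (vecT p - real (p ?n) *\<^sub>R ?d)) \<in> closed_segment (vecT u) (vecT v)"
      using undone \<theta> by (auto simp: in_segment(1))
  qed (use A in auto)
qed

lemma segment_parameter_average:
  fixes U V :: "'v::real_vector"
  assumes UV: "U \<noteq> V" and c: "sum c A = 1"
    and avg: "(\<Sum>p\<in>A. c p *\<^sub>R ((1 - \<beta> p) *\<^sub>R U + \<beta> p *\<^sub>R V)) = (1 - \<theta>) *\<^sub>R U + \<theta> *\<^sub>R V"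
  shows "(\<Sum>p\<in>A. c p * \<beta> p) = \<theta>"
proof -
  define s where "s = (\<Sum>p\<in>A. c p * \<beta> p)"
  have "(\<Sum>p\<in>A. c p *\<^sub>R ((1 - \<beta> p) *\<^sub>R U + \<beta> p *\<^sub>R V))
      = (\<Sum>p\<in>A. c p * (1 - \<beta> p)) *\<^sub>R U + s *\<^sub>R V"
    by (simp add: s_def scaleR_add_right scaleR_sum_left sum.distrib)
  also have "(\<Sum>p\<in>A. c p * (1 - \<beta> p)) = 1 - s"
    using c by (simp add: s_def right_diff_distrib sum_subtractf)
  finally have "(1 - s) *\<^sub>R U + s *\<^sub>R V = (1 - \<theta>) *\<^sub>R U + \<theta> *\<^sub>R V"
    using avg by simp
  then have "s *\<^sub>R (V - U) = \<theta> *\<^sub>R (V - U)"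
    by (simp add: algebra_simps)
  then show ?thesis using UV by (simp add: s_def)
qed

text \<open>Since the coordinate of the leading element h stays nonnegative, a lattice point
  p = x + gamma d, d the direction of the operation at v, satisfies
  gamma * kappa R(h) <= x(h); if x(h) <= b v(h) = b kappa R(h) this bounds gamma.\<close>

lemma new_weight_bound:
  assumes a: "applicable v \<nu>" and hn: "new_elem v \<nu> \<noteq> lead \<nu>"
    and p: "vecT p = x + real (p (new_elem v \<nu>)) *\<^sub>R mu_dir v \<nu>"
    and x: "x $ lead \<nu> \<le> b * real (v (lead \<nu>))"
  shows "real (p (new_elem v \<nu>)) \<le> b * real (mu_mult v \<nu>)"
proof -
  let ?R = "real (mu_removed v \<nu> (lead \<nu>))"
  have "0 \<le> real (p (lead \<nu>))" by simp
  then have "real (p (new_elem v \<nu>)) * ?R \<le> b * real (mu_mult v \<nu>) * ?R"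
    using arg_cong[OF p, of "\<lambda>x. x $ lead \<nu>"] x mu_dir_lead[OF hn] mu_lead(1)[OF a]
    by (simp add: algebra_simps)
  then show ?thesis using mu_lead(2)[OF a] by simp
qed

lemma weighted_bounds_tight:
  fixes a b c :: "'i \<Rightarrow> real"
  assumes A: "finite A" "q \<in> A" and c: "\<And>p. p \<in> A \<Longrightarrow> 0 < c p"
    and le: "\<And>p. p \<in> A \<Longrightarrow> a p \<le> b p"
    and avg: "(\<Sum>p\<in>A. c p * a p) = (\<Sum>p\<in>A. c p * b p)"
  shows "a q = b q"
proof -
  have "(\<Sum>p\<in>A. c p * (b p - a p)) = 0"
    using avg by (simp add: right_diff_distrib sum_subtractf)
  moreover have "0 \<le> c p * (b p - a p)" if "p \<in> A" for p
    using c[OF that] le[OF that] by simp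
  ultimately have "\<forall>p\<in>A. c p * (b p - a p) = 0" by (simp add: sum_nonneg_eq_0_iff[OF A(1)])
  then have "c q * (b q - a q) = 0" using A(2) ..
  then show ?thesis using c[OF A(2)] by simp
qed

lemma new_elem_at_vertex:
  assumes V: "is_vertex g0 (vecT v)" and a: "applicable v \<nu>"
  shows "v (new_elem v \<nu>) = 0" and "new_elem v \<nu> \<noteq> lead \<nu>"
proof -
  have vT: "v \<in> Tset g0" using V by (rule vertex_in_Tset)
  show vn: "v (new_elem v \<nu>) = 0"
    by (rule new_elem_outside[OF vertex_face[OF V] vT vT order.refl a])
  have "0 < v (lead \<nu>)" using mu_lead[OF a] mu_mult_pos[OF a] by simp
  then show "new_elem v \<nu> \<noteq> lead \<nu>" using vn by auto
qed

lemma edge_from_vertex: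
  assumes V: "is_vertex g0 (vecT v)" and a: "applicable v \<nu>"
  shows "closed_segment (vecT v) (vecT (apply_mu v \<nu>)) face_of corner g0"
proof -
  let ?n = "new_elem v \<nu>" and ?d = "mu_dir v \<nu>" and ?\<kappa> = "mu_mult v \<nu>"
  have vT: "v \<in> Tset g0" using V by (rule vertex_in_Tset)
  note vn = new_elem_at_vertex(1)[OF V a] and hn = new_elem_at_vertex(2)[OF V a]
  show ?thesis
  proof (rule segment_face_of_cornerI[OF vT apply_mu_Tset[OF a vT]])
    fix A c \<theta> p
    assume A: "finite A" "A \<subseteq> Tset g0" "\<And>p. p \<in> A \<Longrightarrow> 0 < c p" "sum c A = 1"
      and \<theta>: "0 \<le> \<theta>" "\<theta> \<le> 1"
      and comb: "(\<Sum>p\<in>A. c p *\<^sub>R vecT p) = (1 - \<theta>) *\<^sub>R vecT v + \<theta> *\<^sub>R vecT (apply_mu v \<nu>)"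
      and p: "p \<in> A"
    have X: "vecT p = vecT v + real (p ?n) *\<^sub>R ?d"
      using undo_on_segment(3)[OF vertex_face[OF V] a vn vn hn A \<theta> comb p] by (simp add: diff_eq_eq)
    have "real (p ?n) \<le> 1 * real ?\<kappa>" by (rule new_weight_bound[OF a hn X]) simp
    moreover have "0 < real ?\<kappa>" using mu_mult_pos[OF a] by simp
    ultimately show "vecT p \<in> closed_segment (vecT v) (vecT (apply_mu v \<nu>))"
      unfolding in_segment(1) vecT_apply_mu[OF a] X
      by (intro exI[of _ "real (p ?n) / real ?\<kappa>"]) (simp add: algebra_simps)
  qed
qed

lemma face_extend:
  assumes F: "closed_segment (vecT u) (vecT v) face_of corner g0"
    and uT: "u \<in> Tset g0" and vT: "v \<in> Tset g0" and uv: "u \<noteq> v" and m: "mass v \<le> mass u"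
    and a: "applicable v \<nu>" and uh: "u (lead \<nu>) = 0"
  shows "closed_segment (vecT u) (vecT (apply_mu v \<nu>)) face_of corner g0"
proof -
  let ?n = "new_elem v \<nu>" and ?d = "mu_dir v \<nu>" and ?\<kappa> = "mu_mult v \<nu>"
  have V: "is_vertex g0 (vecT v)" using F by (rule endpoint_vertex)
  note vn = new_elem_at_vertex(1)[OF V a] and hn = new_elem_at_vertex(2)[OF V a]
  have un: "u ?n = 0" by (rule new_elem_outside[OF F uT vT m a])
  have UV: "vecT u \<noteq> vecT v" using uv by (simp add: vecT_eq_iff)
  show ?thesis
  proof (rule segment_face_of_cornerI[OF uT apply_mu_Tset[OF a vT]])
    fix A c \<theta> q
    assume A: "finite A" "A \<subseteq> Tset g0" "\<And>p. p \<in> A \<Longrightarrow> 0 < c p" "sum c A = 1"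
      and \<theta>: "0 \<le> \<theta>" "\<theta> \<le> 1"
      and comb: "(\<Sum>p\<in>A. c p *\<^sub>R vecT p) = (1 - \<theta>) *\<^sub>R vecT u + \<theta> *\<^sub>R vecT (apply_mu v \<nu>)"
      and q: "q \<in> A"
    note undo = undo_on_segment[OF F a un vn hn A \<theta> comb]
    have "\<forall>p\<in>A. \<exists>b. 0 \<le> b \<and> b \<le> 1
        \<and> vecT p - real (p ?n) *\<^sub>R ?d = (1 - b) *\<^sub>R vecT u + b *\<^sub>R vecT v"
      by (intro ballI) (rule undo(3)[unfolded in_segment(1)])
    then obtain \<beta> where \<beta>: "\<forall>p\<in>A. 0 \<le> \<beta> p \<and> \<beta> p \<le> 1
        \<and> vecT p - real (p ?n) *\<^sub>R ?d = (1 - \<beta> p) *\<^sub>R vecT u + \<beta> p *\<^sub>R vecT v"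
      by (rule bchoice[THEN exE])
    have "(\<Sum>p\<in>A. c p *\<^sub>R ((1 - \<beta> p) *\<^sub>R vecT u + \<beta> p *\<^sub>R vecT v))
        = (\<Sum>p\<in>A. c p *\<^sub>R (vecT p - real (p ?n) *\<^sub>R ?d))"
      using \<beta> by (intro sum.cong) simp_all
    also have "\<dots> = (1 - \<theta>) *\<^sub>R vecT u + \<theta> *\<^sub>R vecT v" by (rule undo(2))
    finally have avg: "(\<Sum>p\<in>A. c p * \<beta> p) = \<theta>"
      by (rule segment_parameter_average[OF UV A(4)])
    have le: "real (p ?n) \<le> \<beta> p * real ?\<kappa>" if "p \<in> A" for p
    proof (rule new_weight_bound[OF a hn])
      show "vecT p = ((1 - \<beta> p) *\<^sub>R vecT u + \<beta> p *\<^sub>R vecT v) + real (p ?n) *\<^sub>R ?d"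
        using bspec[OF \<beta> that] by (simp add: diff_eq_eq)
    qed (simp add: uh)
    txt \<open>Both sides of these bounds average to theta kappa, so they are equalities.\<close>
    have "(\<Sum>p\<in>A. c p * (\<beta> p * real ?\<kappa>)) = (\<Sum>p\<in>A. c p * \<beta> p) * real ?\<kappa>"
      by (simp add: sum_distrib_right mult.assoc)
    then have eq: "real (q ?n) = \<beta> q * real ?\<kappa>"
      using weighted_bounds_tight[where a = "\<lambda>p. real (p ?n)" and b = "\<lambda>p. \<beta> p * real ?\<kappa>"
          and c = c, OF A(1) q A(3) le] avg undo(1)
      by simp
    show "vecT q \<in> closed_segment (vecT u) (vecT (apply_mu v \<nu>))"
      unfolding in_segment(1) vecT_apply_mu[OF a]
    proof (intro exI conjI)
      show "0 \<le> \<beta> q" "\<beta> q \<le> 1" using bspec[OF \<beta> q] by auto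
      show "vecT q = (1 - \<beta> q) *\<^sub>R vecT u + \<beta> q *\<^sub>R (vecT v + real ?\<kappa> *\<^sub>R ?d)"
        using bspec[OF \<beta> q] eq by (simp add: algebra_simps eq_diff_eq)
    qed
  qed
qed

section \<open>Chains of mu-operations\<close>

definition mu_chain :: "nat \<Rightarrow> (nat \<Rightarrow> 'a::ab_group_add \<Rightarrow> nat) \<Rightarrow> (nat \<Rightarrow> 'a muop) \<Rightarrow> bool" where
  "mu_chain m t \<nu> \<longleftrightarrow>
     (\<forall>i<m. applicable (t i) (\<nu> (Suc i)) \<and> t (Suc i) = apply_mu (t i) (\<nu> (Suc i)))
   \<and> (\<forall>i. Suc (Suc i) \<le> m \<longrightarrow> lead (\<nu> (Suc (Suc i))) = new_elem (t i) (\<nu> (Suc i)))"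

lemma mu_chainD:
  assumes "mu_chain m t \<nu>"
  shows "i < m \<Longrightarrow> applicable (t i) (\<nu> (Suc i))"
    and "i < m \<Longrightarrow> t (Suc i) = apply_mu (t i) (\<nu> (Suc i))"
    and "Suc (Suc i) \<le> m \<Longrightarrow> lead (\<nu> (Suc (Suc i))) = new_elem (t i) (\<nu> (Suc i))"
  using assms by (simp_all add: mu_chain_def)

lemma mu_chain_shift: "mu_chain m t \<nu> \<Longrightarrow> mu_chain (m - k) (\<lambda>i. t (k + i)) (\<lambda>i. \<nu> (k + i))"
  by (simp add: mu_chain_def)

text \<open>Along a chain starting at a vertex t_0, every [t_0, t_j] with j >= 1 is an edge, the
  mass strictly decreases, and the element created by the j-th operation is absent
  from t_0 (so that the next operation, led by it, satisfies the hypothesis of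
  face_extend).\<close>

lemma chain_edges_from_start:
  assumes chain: "mu_chain m t \<nu>" and V: "is_vertex g0 (vecT (t 0))"
  shows "Suc j \<le> m \<Longrightarrow> closed_segment (vecT (t 0)) (vecT (t (Suc j))) face_of corner g0
           \<and> mass (t (Suc j)) < mass (t 0) \<and> t 0 (new_elem (t j) (\<nu> (Suc j))) = 0"
proof (induction j)
  case 0
  then have a: "applicable (t 0) (\<nu> 1)" and step: "t 1 = apply_mu (t 0) (\<nu> 1)"
    using mu_chainD[OF chain, of 0] by simp_all
  show ?case
    using edge_from_vertex[OF V a] mass_apply_mu[OF a] new_elem_at_vertex(1)[OF V a] step
    by simp
next
  case (Suc j)
  let ?u = "t 0" and ?v = "t (Suc j)" and ?\<nu> = "\<nu> (Suc (Suc j))"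
  have a: "applicable ?v ?\<nu>" and step: "t (Suc (Suc j)) = apply_mu ?v ?\<nu>"
    and lead: "lead ?\<nu> = new_elem (t j) (\<nu> (Suc j))"
    using mu_chainD[OF chain, of "Suc j"] mu_chainD(3)[OF chain, of j] Suc.prems by simp_all
  have F: "closed_segment (vecT ?u) (vecT ?v) face_of corner g0"
    and m: "mass ?v < mass ?u" and uh: "?u (lead ?\<nu>) = 0"
    using Suc.IH Suc.prems lead by auto
  have uT: "?u \<in> Tset g0" using V by (rule vertex_in_Tset)
  have vT: "?v \<in> Tset g0" using endpoint_vertex[OF F] by (rule vertex_in_Tset)
  have "?u \<noteq> ?v" using m by auto
  then show ?case
    using face_extend[OF F uT vT _ less_imp_le[OF m] a uh] mass_apply_mu[OF a] m
      new_elem_outside[OF F uT vT less_imp_le[OF m] a] step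
    by simp
qed

text \<open>Restarting the chain at any of its points, which is a vertex by the above.\<close>

lemma chain_edges:
  assumes chain: "mu_chain m t \<nu>" and V: "is_vertex g0 (vecT (t 0))" and ij: "i < j" "j \<le> m"
  shows "closed_segment (vecT (t i)) (vecT (t j)) face_of corner g0 \<and> mass (t j) < mass (t i)"
proof -
  have Vi: "is_vertex g0 (vecT (t i))"
  proof (cases i)
    case (Suc k)
    then show ?thesis
      using chain_edges_from_start[OF chain V, of k] ij by (auto intro: endpoint_vertex)
  qed (use V in simp)
  then have "is_vertex g0 (vecT ((\<lambda>k. t (i + k)) 0))" by simp
  note shifted = chain_edges_from_start[OF mu_chain_shift[OF chain, of i] this, of "j - i - 1"]
  have "Suc (j - i - 1) \<le> m - i" and j: "i + Suc (j - i - 1) = j" using ij by auto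
  then show ?thesis using shifted by (simp add: j)
qed

text \<open>The theorem: the points of a chain starting at a vertex are pairwise distinct,
  pairwise adjacent vertices.\<close>

theorem theorem6:
  fixes g0 :: "'a::{ab_group_add,finite}"
    and m :: nat
    and t :: "nat \<Rightarrow> ('a \<Rightarrow> nat)"
    and \<nu> :: "nat \<Rightarrow> 'a muop"
  assumes "m \<ge> 1"
    and "is_vertex g0 (vecT (t 0))"
    and "\<And>i. 1 \<le> i \<Longrightarrow> i \<le> m \<Longrightarrow> applicable (t (i - 1)) (\<nu> i)"
    and "\<And>i. 1 \<le> i \<Longrightarrow> i \<le> m \<Longrightarrow> t i = apply_mu (t (i - 1)) (\<nu> i)"
    and "\<And>i. 1 \<le> i \<Longrightarrow> i \<le> m - 1 \<Longrightarrow> lead (\<nu> (i + 1)) = new_elem (t (i - 1)) (\<nu> i)"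
  shows "(\<forall>i\<le>m. is_vertex g0 (vecT (t i)))
       \<and> (\<forall>i\<le>m. \<forall>j\<le>m. i \<noteq> j \<longrightarrow> vecT (t i) \<noteq> vecT (t j) \<and> adjacent g0 (vecT (t i)) (vecT (t j)))"
proof -
  have chain: "mu_chain m t \<nu>"
    unfolding mu_chain_def using assms(3-5)[of "Suc _"] by auto
  note edge = chain_edges[OF chain assms(2)]
  have vertex: "is_vertex g0 (vecT (t i))" if "i \<le> m" for i
    using assms(2) edge[of 0 i] that by (cases i) (auto intro: endpoint_vertex)
  have pair: "vecT (t i) \<noteq> vecT (t j) \<and> adjacent g0 (vecT (t i)) (vecT (t j))"
    if "i < j" "j \<le> m" for i j
    using edge[OF that] vertex that by (auto simp: adjacent_def vecT_eq_iff)
  have "vecT (t i) \<noteq> vecT (t j) \<and> adjacent g0 (vecT (t i)) (vecT (t j))"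
    if "i \<le> m" "j \<le> m" "i \<noteq> j" for i j
    using pair[of i j] pair[of j i] that
    by (cases "i < j") (auto simp: adjacent_def closed_segment_commute)
  with vertex show ?thesis by blast
qed

end
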